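(* There is a constant $C_2>0$ such that for every $\ell\ge0$ and every path $p_0,p_1,\dots,p_\ell$ in the graph $G_1+G_2$, its $(G_1+G_2)$-weight $\prod_{i=1}^{\ell}(G_1+G_2)(p_{i-1},p_i)$ is at most $$C_2^{\,\ell+\max_{0\le i\le\ell}|p_i|}.$$
   Context: $\mathbb N=\{0,1,2,\dots\}$; for $t\in\mathbb R$, $\langle t\rangle:=1+|t|$. A directed weighted $\mathbb Z^2$-graph is a map $G\colon\mathbb Z^2\times\mathbb Z^2\to[0,\infty)$ ($G(p,q)$ = weight of edge $p\to q$, $0$ meaning no edge); a path of length $\ell$ is $p_0,\dots,p_\ell$ with $G(p_{i-1},p_i)>0$, and its $G$-weight is $\prod_{i=1}^\ell G(p_{i-1},p_i)$. The sum is $(G+G')(p,q)=G(p,q)+G'(p,q)$ and the product is $(G\cdot G')(p,q)=\sum_{r\in\mathbb Z^2}G(p,r)G'(r,q)$. $G_1$ is the graph whose only nonzero weights are: $G_1((k,h),(k-2,h+2))=\frac{\langle\max\{k,|h|\}\rangle}{\langle h\rangle}$ for $k\ge2$, $h\in\mathbb Z$; $G_1((k,h),(k,h))=1$ for $k\ge0$, $h\in\mathbb Z$; $G_1((k,h),(k+2,h-2))=\frac{\langle h\rangle}{\langle\max\{k,|h|\}\rangle}$ for $k\ge0$, $h\in\mathbb Z$. $G_2((k,h),(k',h'))=1$ if $k,k'\ge0$, $(k,h)\ne(k',h')$ and $(k'-k,h'-h)\in\{c_1(1,0)+c_2(-1,2): c_1,c_2\in\mathbb N\}$, and $G_2((k,h),(k',h'))=0$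 otherwise. *)

theory Defs
  imports "HOL-Analysis.Analysis"
begin

type_synonym pt = "int \<times> int"

definition jb :: "real \<Rightarrow> real" where
  "jb t = 1 + \<bar>t\<bar>"

definition G1 :: "pt \<Rightarrow> pt \<Rightarrow> real" where
  "G1 p q = (let (k, h) = p; (k', h') = q in
     if k \<ge> 2 \<and> k' = k - 2 \<and> h' = h + 2 then jb (real_of_int (max k \<bar>h\<bar>)) / jb (real_of_int h)
     else if k \<ge> 0 \<and> k' = k \<and> h' = h then 1
     else if k \<ge> 0 \<and> k' = k + 2 \<and> h' = h - 2 then jb (real_of_int h) / jb (real_of_int (max k \<bar>h\<bar>))
     else 0)"

definition G2 :: "pt \<Rightarrow> pt \<Rightarrow> real" where
  "G2 p q = (let (k, h) = p; (k', h') = q in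
     if k \<ge> 0 \<and> k' \<ge> 0 \<and> p \<noteq> q \<and>
        (\<exists>c1 c2 :: nat. k' - k = int c1 - int c2 \<and> h' - h = 2 * int c2)
     then 1 else 0)"

definition Gsum :: "(pt \<Rightarrow> pt \<Rightarrow> real) \<Rightarrow> (pt \<Rightarrow> pt \<Rightarrow> real) \<Rightarrow> pt \<Rightarrow> pt \<Rightarrow> real" where
  "Gsum G G' p q = G p q + G' p q"

definition is_path :: "(pt \<Rightarrow> pt \<Rightarrow> real) \<Rightarrow> (nat \<Rightarrow> pt) \<Rightarrow> nat \<Rightarrow> bool" where
  "is_path G p l \<longleftrightarrow> (\<forall>i\<in>{1..l}. G (p (i - 1)) (p i) > 0)"

definition path_weight :: "(pt \<Rightarrow> pt \<Rightarrow> real) \<Rightarrow> (nat \<Rightarrow> pt) \<Rightarrow> nat \<Rightarrow> real" where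
  "path_weight G p l = (\<Prod>i=1..l. G (p (i - 1)) (p i))"

definition ptnorm :: "pt \<Rightarrow> real" where
  "ptnorm p = sqrt (real_of_int (fst p) ^ 2 + real_of_int (snd p) ^ 2)"

end

theory Submission
  imports Defs
begin

text \<open>
  An upward edge \<open>(k, h) \<rightarrow> (k - 2, h + 2)\<close> of \<open>G\<^sub>1\<close> keeps \<open>s = k + h\<close> fixed and has weight
  \<open>\<langle>max (s - h) \<bar>h\<bar>\<rangle> / \<langle>h\<rangle>\<close>. The potential \<open>\<Phi>\<^sub>N(k, h)\<close> is the product of these weights along
  the ladder of heights \<open>-N - 2 \<le> j < h\<close>, \<open>j \<equiv> h (mod 2)\<close>, on the antidiagonal \<open>k + h = s\<close>.
  An upward edge multiplies \<open>\<Phi>\<^sub>N\<close> exactly by its weight, a downward edge has weight at most 9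
  times the reciprocal of the ladder factor it removes, and every other edge has weight 1 and
  enlarges both \<open>s\<close> and the ladder. Hence the weight of a path staying in the box \<open>|k|, |h| \<le> N\<close>,
  times \<open>\<Phi>\<^sub>N\<close> at its start, is at most \<open>9\<^sup>\<ell>\<close> times \<open>\<Phi>\<^sub>N\<close> at its end. Finally \<open>\<Phi>\<^sub>N \<ge> 1\<close>, and
  on the box every ladder factor is at most \<open>(3N + 3) / \<langle>j\<rangle>\<close>, so \<open>\<Phi>\<^sub>N\<close> is bounded by two terms
  of the exponential series of \<open>3N + 3\<close>.
\<close>

lemma power_div_fact_le_exp:
  fixes x :: real
  assumes "0 \<le> x"
  shows "x ^ n / fact n \<le> exp x"
proof -
  have "(\<Sum>i\<in>{n}. inverse (fact i) * x ^ i) \<le> (\<Sum>i. inverse (fact i) * x ^ i)"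
    by (rule sum_le_suminf[OF summable_exp]) (use assms in auto)
  then show ?thesis
    by (simp add: exp_def scaleR_conv_of_real divide_inverse mult.commute)
qed

lemma prod_div_Suc_le_exp:
  fixes A :: real
  assumes "0 \<le> A"
  shows "(\<Prod>i<n. A / real (Suc i)) \<le> exp A"
proof -
  have "(\<Prod>i<n. A / real (Suc i)) = A ^ n / fact n"
    by (simp add: prod_dividef fact_prod_Suc atLeast0LessThan)
  with power_div_fact_le_exp[OF assms] show ?thesis
    by simp
qed

lemma jb_ge_1: "1 \<le> jb x"
  unfolding jb_def by simp

lemma jb_pos: "0 < jb x"
  unfolding jb_def by simp

lemma prod_div_jb_le_exp:
  fixes A :: real
  assumes "0 \<le> A"
  shows "(\<Prod>j\<in>{- int m..<int n}. A / jb (real_of_int j)) \<le> exp A * exp A"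
proof -
  have neg: "{- int m..<0} = (\<lambda>i. - int i - 1) ` {..<m}"
  proof -
    have "x \<in> (\<lambda>i. - int i - 1) ` {..<m}" if "x \<in> {- int m..<0}" for x
      using that by (intro image_eqI[of _ _ "nat (- x - 1)"]) auto
    then show ?thesis by auto
  qed
  have nonneg: "{0..<int n} = int ` {..<n}"
  proof -
    have "x \<in> int ` {..<n}" if "x \<in> {0..<int n}" for x
      using that by (intro image_eqI[of _ _ "nat x"]) auto
    then show ?thesis by auto
  qed
  have "(\<Prod>j\<in>{- int m..<0}. A / jb (real_of_int j)) = (\<Prod>i<m. A / jb (- real i - 1))"
    unfolding neg by (subst prod.reindex) (auto simp: inj_on_def)
  also have "\<dots> \<le> (\<Prod>i<m. A / real (Suc i))"
    by (rule prod_mono) (use assms in \<open>auto simp: jb_def intro!: divide_left_mono\<close>)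
  also have "\<dots> \<le> exp A"
    by (rule prod_div_Suc_le_exp[OF assms])
  finally have "(\<Prod>j\<in>{- int m..<0}. A / jb (real_of_int j)) \<le> exp A" .
  moreover have "(\<Prod>j\<in>{0..<int n}. A / jb (real_of_int j)) = (\<Prod>i<n. A / real (Suc i))"
    unfolding nonneg by (subst prod.reindex) (auto simp: inj_on_def jb_def add.commute)
  moreover have "{- int m..<int n} = {- int m..<0} \<union> {0..<int n}"
    by auto
  ultimately show ?thesis
    using prod_div_Suc_le_exp[OF assms, of n] assms jb_pos
    by (simp add: prod.union_disjoint mult_mono prod_nonneg)
qed

definition up_weight :: "int \<Rightarrow> int \<Rightarrow> real" where
  "up_weight s j = jb (real_of_int (max (s - j) \<bar>j\<bar>)) / jb (real_of_int j)"

definition ladder :: "nat \<Rightarrow> int \<Rightarrow> int set" where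
  "ladder N h = {j. - int N - 2 \<le> j \<and> j < h \<and> even (h - j)}"

definition potential :: "nat \<Rightarrow> pt \<Rightarrow> real" where
  "potential N p = (\<Prod>j\<in>ladder N (snd p). up_weight (fst p + snd p) j)"

lemma up_weight_ge_1: "1 \<le> up_weight s j"
  unfolding up_weight_def jb_def by simp

lemma up_weight_nonneg: "0 \<le> up_weight s j"
  using up_weight_ge_1 order_trans zero_le_one by blast

lemma up_weight_mono: "s \<le> s' \<Longrightarrow> up_weight s j \<le> up_weight s' j"
  unfolding up_weight_def jb_def by (intro divide_right_mono) auto

lemma finite_ladder: "finite (ladder N h)"
  by (rule finite_subset[of _ "{- int N - 2..<h}"]) (auto simp: ladder_def)

lemma ladder_mono: "h \<le> h' \<Longrightarrow> even (h' - h) \<Longrightarrow> ladder N h \<subseteq> ladder N h'"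
  unfolding ladder_def by auto

lemma ladder_add_2: "- int N - 2 \<le> h \<Longrightarrow> ladder N (h + 2) = insert h (ladder N h)"
  unfolding ladder_def by auto presburger+

lemma potential_ge_1: "1 \<le> potential N p"
  unfolding potential_def using up_weight_ge_1 by (intro prod_ge_1) auto

lemma potential_nonneg: "0 \<le> potential N p"
  using potential_ge_1 order_trans zero_le_one by blast

lemma potential_up:
  assumes "- int N - 2 \<le> h"
  shows "potential N (k - 2, h + 2) = up_weight (k + h) h * potential N (k, h)"
proof -
  have "h \<notin> ladder N h"
    by (simp add: ladder_def)
  with assms show ?thesis
    by (simp add: potential_def ladder_add_2 finite_ladder)
qed

lemma potential_mono:
  assumes "k + h \<le> k' + h'" "h \<le> h'" "even (h' - h)"
  shows "potential N (k, h) \<le> potential N (k', h')"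
proof -
  have "potential N (k, h) \<le> (\<Prod>j\<in>ladder N h. up_weight (k' + h') j)"
    unfolding potential_def fst_conv snd_conv
    using up_weight_mono[OF assms(1)] up_weight_nonneg by (intro prod_mono) auto
  also have "\<dots> \<le> (\<Prod>j\<in>ladder N h'. up_weight (k' + h') j)"
    using up_weight_ge_1 up_weight_nonneg ladder_mono[OF assms(2,3)] finite_ladder
    by (intro prod_mono2) auto
  finally show ?thesis
    unfolding potential_def by simp
qed

lemma potential_le_exp:
  assumes "\<bar>k\<bar> \<le> int N" "\<bar>h\<bar> \<le> int N"
  shows "potential N (k, h) \<le> exp (6 * real N + 6)"
proof -
  define A where "A = 3 * real N + 3"
  have A_nonneg: "0 \<le> A"
    unfolding A_def by simp
  have "potential N (k, h) \<le> (\<Prod>j\<in>ladder N h. A / jb (real_of_int j))"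
    unfolding potential_def fst_conv snd_conv
  proof (rule prod_mono)
    fix j
    assume "j \<in> ladder N h"
    with assms have "max (k + h - j) \<bar>j\<bar> \<le> 3 * int N + 2"
      unfolding ladder_def by auto
    then have "jb (real_of_int (max (k + h - j) \<bar>j\<bar>)) \<le> A"
      unfolding jb_def A_def by (simp del: of_int_max) linarith
    then show "0 \<le> up_weight (k + h) j \<and> up_weight (k + h) j \<le> A / jb (real_of_int j)"
      unfolding up_weight_def using jb_pos jb_ge_1
      by (auto intro: divide_right_mono divide_nonneg_pos less_imp_le order_trans[OF zero_le_one])
  qed
  also have "\<dots> \<le> (\<Prod>j\<in>{- int (N + 2)..<int N}. A / jb (real_of_int j))"
  proof (rule prod_mono2)
    show "ladder N h \<subseteq> {- int (N + 2)..<int N}"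
      using assms unfolding ladder_def by auto
    fix j
    assume "j \<in> {- int (N + 2)..<int N} - ladder N h"
    then have "jb (real_of_int j) \<le> A"
      unfolding jb_def A_def by auto
    then show "1 \<le> A / jb (real_of_int j)"
      using jb_pos[of "real_of_int j"] by simp
  qed (use A_nonneg jb_pos in \<open>auto intro!: divide_nonneg_pos\<close>)
  also have "\<dots> \<le> exp A * exp A"
    by (rule prod_div_jb_le_exp[OF A_nonneg])
  also have "\<dots> = exp (6 * real N + 6)"
    unfolding A_def by (simp flip: exp_add)
  finally show ?thesis .
qed

lemma Gsum_G1_G2_edge_cases:
  assumes "Gsum G1 G2 (k, h) (k', h') > 0"
  obtains (up) "k \<ge> 2" "k' = k - 2" "h' = h + 2"
      "Gsum G1 G2 (k, h) (k', h') = up_weight (k + h) h"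
  | (down) "k \<ge> 0" "k' = k + 2" "h' = h - 2"
      "Gsum G1 G2 (k, h) (k', h') = jb (real_of_int h) / jb (real_of_int (max k \<bar>h\<bar>))"
  | (flat) "k + h \<le> k' + h'" "h \<le> h'" "even (h' - h)" "Gsum G1 G2 (k, h) (k', h') = 1"
proof (cases "k \<ge> 2 \<and> k' = k - 2 \<and> h' = h + 2")
  case True
  then show ?thesis
    by (intro up) (auto simp: Gsum_def G1_def G2_def up_weight_def)
next
  case not_up: False
  show ?thesis
  proof (cases "k \<ge> 0 \<and> k' = k + 2 \<and> h' = h - 2")
    case True
    then show ?thesis
      by (intro down) (auto simp: Gsum_def G1_def G2_def)
  next
    case not_down: False
    show ?thesis
    proof (cases "k \<ge> 0 \<and> k' = k \<and> h' = h")
      case True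
      then show ?thesis
        by (intro flat) (auto simp: Gsum_def G1_def G2_def)
    next
      case False
      with not_up not_down have G1_zero: "G1 (k, h) (k', h') = 0"
        by (auto simp: G1_def)
      with assms obtain c1 c2 :: nat where
        "k' - k = int c1 - int c2" "h' - h = 2 * int c2" "G2 (k, h) (k', h') = 1"
        by (auto simp: Gsum_def G2_def split: if_splits)
      with G1_zero show ?thesis
        by (intro flat) (auto simp: Gsum_def)
    qed
  qed
qed

lemma down_weight_mul_up_weight_le_9:
  "jb (real_of_int h) / jb (real_of_int (max k \<bar>h\<bar>)) * up_weight (k + h) (h - 2) \<le> 9"
proof -
  let ?a = "jb (real_of_int h)" and ?b = "jb (real_of_int (max k \<bar>h\<bar>))"
  let ?c = "jb (real_of_int (max (k + 2) \<bar>h - 2\<bar>))" and ?d = "jb (real_of_int (h - 2))"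
  have "?a * ?c \<le> (3 * ?d) * (3 * ?b)"
    by (intro mult_mono) (auto simp: jb_def abs_if)
  then have "?a * ?c \<le> 9 * (?b * ?d)"
    by (simp add: algebra_simps)
  then show ?thesis
    using jb_pos[of "real_of_int h"] jb_pos[of "real_of_int (h - 2)"]
      jb_pos[of "real_of_int (max k \<bar>h\<bar>)"]
    by (simp add: up_weight_def field_simps)
qed

lemma edge_mul_potential_le:
  assumes edge: "Gsum G1 G2 p q > 0" and low: "- int N \<le> snd q"
  shows "Gsum G1 G2 p q * potential N p \<le> 9 * potential N q"
proof -
  obtain k h k' h' where pq: "p = (k, h)" "q = (k', h')"
    by fastforce
  from edge[unfolded pq] show ?thesis
  proof (cases rule: Gsum_G1_G2_edge_cases)
    case up
    with low pq potential_up[of N h k] show ?thesis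
      using potential_nonneg[of N p] up_weight_nonneg[of "k + h" h] by simp
  next
    case down
    with low pq potential_up[of N "h - 2" "k + 2"]
    have "Gsum G1 G2 p q * potential N p
        = (jb (real_of_int h) / jb (real_of_int (max k \<bar>h\<bar>)) * up_weight (k + h) (h - 2))
          * potential N q"
      by simp
    also have "\<dots> \<le> 9 * potential N q"
      by (rule mult_right_mono[OF down_weight_mul_up_weight_le_9 potential_nonneg])
    finally show ?thesis .
  next
    case flat
    with pq potential_mono[of k h k' h' N] show ?thesis
      using potential_nonneg[of N q] by simp
  qed
qed

lemma path_weight_mul_potential_le:
  assumes "is_path (Gsum G1 G2) p l" "\<forall>i\<le>l. - int N \<le> snd (p i)"
  shows "path_weight (Gsum G1 G2) p l * potential N (p 0) \<le> 9 ^ l * potential N (p l)"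
  using assms
proof (induction l)
  case 0
  then show ?case
    by (simp add: path_weight_def)
next
  case (Suc l)
  let ?G = "Gsum G1 G2"
  let ?w = "?G (p l) (p (Suc l))"
  have "is_path ?G p l"
    using Suc.prems(1) by (simp add: is_path_def)
  with Suc have IH: "path_weight ?G p l * potential N (p 0) \<le> 9 ^ l * potential N (p l)"
    by simp
  have w_pos: "?w > 0"
    using Suc.prems(1) unfolding is_path_def by (metis atLeastAtMost_iff diff_Suc_1 le_add1 order_refl plus_1_eq_Suc)
  have "path_weight ?G p (Suc l) * potential N (p 0) = ?w * (path_weight ?G p l * potential N (p 0))"
    by (simp add: path_weight_def prod.cl_ivl_Suc)
  also have "\<dots> \<le> ?w * (9 ^ l * potential N (p l))"
    using IH w_pos by (intro mult_left_mono) auto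
  also have "\<dots> = 9 ^ l * (?w * potential N (p l))"
    by simp
  also have "\<dots> \<le> 9 ^ l * (9 * potential N (p (Suc l)))"
    using edge_mul_potential_le[OF w_pos] Suc.prems(2) by (intro mult_left_mono) auto
  finally show ?case
    by simp
qed

lemma path_weight_le_exp:
  assumes path: "is_path (Gsum G1 G2) p l"
    and box: "\<forall>i\<le>l. \<bar>fst (p i)\<bar> \<le> int N \<and> \<bar>snd (p i)\<bar> \<le> int N"
  shows "path_weight (Gsum G1 G2) p l \<le> exp (4 * real l + 6 * real N + 6)"
proof -
  have "0 \<le> path_weight (Gsum G1 G2) p l"
    using path unfolding path_weight_def is_path_def by (auto intro!: prod_nonneg less_imp_le prod_pos)
  then have "path_weight (Gsum G1 G2) p l \<le> path_weight (Gsum G1 G2) p l * potential N (p 0)"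
    using potential_ge_1[of N "p 0"] by (simp add: mult_le_cancel_left1)
  also have "\<dots> \<le> 9 ^ l * potential N (p l)"
    by (rule path_weight_mul_potential_le[OF path]) (use box in \<open>fastforce simp: abs_le_iff\<close>)
  also have "\<dots> \<le> exp (4 * real l) * exp (6 * real N + 6)"
  proof (rule mult_mono)
    have three: "(3::real) \<le> exp 2"
      using exp_ge_add_one_self[of 2] by simp
    have "(9::real) \<le> exp 4"
      using mult_mono[OF three three] by (simp flip: exp_add)
    then have "(9::real) ^ l \<le> exp 4 ^ l"
      by (rule power_mono) simp
    then show "(9::real) ^ l \<le> exp (4 * real l)"
      by (simp add: exp_of_nat_mult[symmetric] mult.commute)
    show "potential N (p l) \<le> exp (6 * real N + 6)"
      using box potential_le_exp[of "fst (p l)" N "snd (p l)"] by simp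
  qed (auto simp: potential_nonneg)
  finally show ?thesis
    by (simp flip: exp_add add: add.assoc)
qed

lemma abs_le_ptnorm: "\<bar>real_of_int (fst p)\<bar> \<le> ptnorm p" "\<bar>real_of_int (snd p)\<bar> \<le> ptnorm p"
  unfolding ptnorm_def by (rule real_sqrt_ge_abs1 real_sqrt_ge_abs2)+

lemma abs_le_nat_ceiling_ptnorm:
  assumes "ptnorm q \<le> M"
  shows "\<bar>fst q\<bar> \<le> int (nat \<lceil>M\<rceil>) \<and> \<bar>snd q\<bar> \<le> int (nat \<lceil>M\<rceil>)"
  using abs_le_ptnorm[of q] assms by linarith

theorem mainTheorem10:
  shows "\<exists>C2 :: real. C2 > 0 \<and>
    (\<forall>(l::nat) (p::nat \<Rightarrow> pt). is_path (Gsum G1 G2) p l \<longrightarrow>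
       path_weight (Gsum G1 G2) p l \<le> C2 powr (real l + Max (ptnorm ` p ` {0..l})))"
proof (intro exI[of _ "exp 16"] conjI allI impI)
  fix l and p :: "nat \<Rightarrow> pt"
  assume path: "is_path (Gsum G1 G2) p l"
  define M where "M = Max (ptnorm ` p ` {0..l})"
  have norm_le_M: "ptnorm (p i) \<le> M" if "i \<le> l" for i
    unfolding M_def using that by (intro Max_ge) auto
  have M_nonneg: "0 \<le> M"
    using norm_le_M[of 0] abs_le_ptnorm(1)[of "p 0"] by linarith
  define N where "N = nat \<lceil>M\<rceil>"
  have box: "\<forall>i\<le>l. \<bar>fst (p i)\<bar> \<le> int N \<and> \<bar>snd (p i)\<bar> \<le> int N"
    unfolding N_def using norm_le_M abs_le_nat_ceiling_ptnorm by blast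
  have "path_weight (Gsum G1 G2) p l \<le> exp (16 * (real l + M))"
  proof (cases "l = 0")
    case True
    then show ?thesis
      using M_nonneg by (simp add: path_weight_def)
  next
    case False
    then have "1 \<le> real l"
      by simp
    moreover have "real N \<le> M + 1"
      unfolding N_def using M_nonneg by linarith
    ultimately have "4 * real l + 6 * real N + 6 \<le> 16 * (real l + M)"
      using M_nonneg unfolding distrib_left by linarith
    with path_weight_le_exp[OF path box] show ?thesis
      by (meson exp_le_cancel_iff order_trans)
  qed
  then show "path_weight (Gsum G1 G2) p l \<le> exp 16 powr (real l + Max (ptnorm ` p ` {0..l}))"
    by (simp add: powr_def M_def algebra_simps)
qed simp

end
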